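(* Let $\lambda_1,\dots,\lambda_8$ be the Gell-Mann matrices (traceless Hermitian $3\times3$ matrices forming a basis of $i\,\mathfrak{su}_3$ with $\operatorname{Tr}(\lambda_a\lambda_b)=2\delta_{ab}$), and for $v\in\mathbb R^8$ write $v\lambda=\sum_av_a\lambda_a$. Then $\frac13(\mathbf 1+v\lambda)$ is a density matrix if and only if $$|v|^2\le\min\big(3,\ 1+\det(v\lambda)\big).$$
   Context: A density matrix is a positive semidefinite Hermitian matrix of trace 1. *)

theory Defs
  imports "HOL-Analysis.Analysis"
begin

type_synonym cmat3 = "complex^3^3"

definition adjoint3 :: "cmat3 \<Rightarrow> cmat3" where
  "adjoint3 A = (\<chi> i j. cnj (A $ j $ i))"

definition hermitian3 :: "cmat3 \<Rightarrow> bool" where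
  "hermitian3 A \<longleftrightarrow> adjoint3 A = A"

definition qform3 :: "cmat3 \<Rightarrow> complex^3 \<Rightarrow> complex" where
  "qform3 A x = (\<Sum>i\<in>UNIV. cnj (x $ i) * (A *v x) $ i)"

definition psd3 :: "cmat3 \<Rightarrow> bool" where
  "psd3 A \<longleftrightarrow> hermitian3 A \<and> (\<forall>x. Im (qform3 A x) = 0 \<and> Re (qform3 A x) \<ge> 0)"

definition density_matrix3 :: "cmat3 \<Rightarrow> bool" where
  "density_matrix3 A \<longleftrightarrow> psd3 A \<and> trace A = 1"

definition smult3 :: "complex \<Rightarrow> cmat3 \<Rightarrow> cmat3" where
  "smult3 c A = (\<chi> i j. c * A $ i $ j)"

definition gell_mann :: "nat \<Rightarrow> cmat3" where
  "gell_mann a =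
    (if a = 1 then vector [vector [0, 1, 0], vector [1, 0, 0], vector [0, 0, 0]]
     else if a = 2 then vector [vector [0, -\<i>, 0], vector [\<i>, 0, 0], vector [0, 0, 0]]
     else if a = 3 then vector [vector [1, 0, 0], vector [0, -1, 0], vector [0, 0, 0]]
     else if a = 4 then vector [vector [0, 0, 1], vector [0, 0, 0], vector [1, 0, 0]]
     else if a = 5 then vector [vector [0, 0, -\<i>], vector [0, 0, 0], vector [\<i>, 0, 0]]
     else if a = 6 then vector [vector [0, 0, 0], vector [0, 0, 1], vector [0, 1, 0]]
     else if a = 7 then vector [vector [0, 0, 0], vector [0, 0, -\<i>], vector [0, \<i>, 0]]
     else if a = 8 then smult3 (complex_of_real (1 / sqrt 3))
                          (vector [vector [1, 0, 0], vector [0, 1, 0], vector [0, 0, -2]])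
     else 0)"

definition vlam :: "(nat \<Rightarrow> real) \<Rightarrow> cmat3" where
  "vlam v = (\<Sum>a\<in>{1..8}. smult3 (complex_of_real (v a)) (gell_mann a))"

definition sqnorm8 :: "(nat \<Rightarrow> real) \<Rightarrow> real" where
  "sqnorm8 v = (\<Sum>a\<in>{1..8}. (v a)^2)"

end

theory Submission
  imports Defs
begin

text \<open>
  A Hermitian 3x3 matrix A is positive semidefinite iff the coefficients tr A, s2(A) (the sum
  of the principal 2x2 minors) and det A of its characteristic polynomial
  t^3 - tr A t^2 + s2(A) t - det A are nonnegative.
  Necessity: diagonal entries and principal minors of a positive semidefinite matrix are
  nonnegative, and det A < 0 would give the characteristic polynomial a negative root by the
  intermediate value theorem, i.e. a negative eigenvalue.
  Sufficiency, first for s2(A) > 0 and then for A + e I with e tending to 0: Cayley-Hamilton gives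
  A (A^2 + s2(A)) = tr A A^2 + det A, and A^2 + s2(A) is invertible, so writing x = (A^2 + s2(A)) z
  turns x^* A x into a nonnegative combination of |A^2 z|^2, |A z|^2 and |z|^2.
  For rho = (1 + v lambda) / 3 the matrix v lambda is traceless with s2(v lambda) = -|v|^2, so
  tr rho = 1, s2(rho) = (3 - |v|^2) / 9 and det rho = (1 - |v|^2 + det (v lambda)) / 27.
\<close>

definition cinner3 :: "complex^3 \<Rightarrow> complex^3 \<Rightarrow> complex" where
  "cinner3 x y = (\<Sum>i\<in>UNIV. cnj (x $ i) * y $ i)"

definition principal_minor_sum :: "cmat3 \<Rightarrow> complex" where
  "principal_minor_sum A =
     A$1$1 * A$2$2 - A$1$2 * A$2$1 + A$1$1 * A$3$3 - A$1$3 * A$3$1 + A$2$2 * A$3$3 - A$2$3 * A$3$2"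

lemma cinner3_add_left: "cinner3 (x + y) z = cinner3 x z + cinner3 y z"
  unfolding cinner3_def by (simp add: algebra_simps sum.distrib)

lemma cinner3_add_right: "cinner3 x (y + z) = cinner3 x y + cinner3 x z"
  unfolding cinner3_def by (simp add: algebra_simps sum.distrib)

lemma cinner3_scale_left: "cinner3 (c *s x) y = cnj c * cinner3 x y"
  unfolding cinner3_def by (simp add: algebra_simps sum_distrib_left)

lemma cinner3_scale_right: "cinner3 x (c *s y) = c * cinner3 x y"
  unfolding cinner3_def by (simp add: algebra_simps sum_distrib_left)

lemma cnj_cinner3: "cnj (cinner3 x y) = cinner3 y x"
  unfolding cinner3_def by (simp add: mult.commute)

lemma cinner3_self: "cinner3 x x = of_real ((norm x)\<^sup>2)"
  unfolding cinner3_def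
  by (simp add: norm_vec_def L2_set_def sum_nonneg complex_norm_square[symmetric] mult.commute)

lemma qform3_eq_cinner3: "qform3 A x = cinner3 x (A *v x)"
  unfolding qform3_def cinner3_def ..

lemma hermitian3_iff: "hermitian3 A \<longleftrightarrow> (\<forall>i j. cnj (A $ i $ j) = A $ j $ i)"
  unfolding hermitian3_def adjoint3_def vec_eq_iff by auto

lemma hermitian3_cinner3:
  assumes "hermitian3 A"
  shows "cinner3 x (A *v y) = cinner3 (A *v x) y"
  using assms unfolding hermitian3_iff cinner3_def matrix_vector_mult_def
  by (simp add: sum_3 algebra_simps)

lemma hermitian3_qform3_real:
  assumes "hermitian3 A"
  shows "qform3 A x \<in> \<real>"
  unfolding Reals_cnj_iff qform3_eq_cinner3 cnj_cinner3 hermitian3_cinner3[OF assms] ..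

lemma hermitian3_add_mat:
  assumes "hermitian3 A" "c \<in> \<real>"
  shows "hermitian3 (A + mat c)"
  using assms unfolding hermitian3_iff Reals_cnj_iff by (simp add: mat_def)

lemma hermitian3_smult3:
  assumes "hermitian3 A" "c \<in> \<real>"
  shows "hermitian3 (smult3 c A)"
  using assms unfolding hermitian3_iff Reals_cnj_iff by (simp add: smult3_def)

lemma hermitian3_char_coeffs_real:
  assumes "hermitian3 A"
  shows "trace A \<in> \<real>" "principal_minor_sum A \<in> \<real>" "det A \<in> \<real>"
  using assms unfolding hermitian3_iff Reals_cnj_iff
  by (simp_all add: trace_def sum_3 principal_minor_sum_def det_3 algebra_simps)

lemma det_mat_minus:
  "det (mat t - A) = t^3 - trace A * t\<^sup>2 + principal_minor_sum A * t - det (A::cmat3)"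
  by (simp add: det_3 trace_def principal_minor_sum_def mat_def sum_3 algebra_simps
      power2_eq_square power3_eq_cube)

lemma char_coeffs_add_mat:
  "trace (A + mat t) = trace A + 3 * t"
  "principal_minor_sum (A + mat t) = principal_minor_sum A + 2 * trace A * t + 3 * t\<^sup>2"
  "det (A + mat t) = det (A::cmat3) + principal_minor_sum A * t + trace A * t\<^sup>2 + t^3"
  by (simp_all add: det_3 trace_def principal_minor_sum_def mat_def sum_3 algebra_simps
      power2_eq_square power3_eq_cube)

lemma char_coeffs_smult3:
  "trace (smult3 c A) = c * trace A"
  "principal_minor_sum (smult3 c A) = c\<^sup>2 * principal_minor_sum A"
  "det (smult3 c A) = c^3 * det A"
  by (simp_all add: smult3_def det_3 trace_def principal_minor_sum_def sum_3 algebra_simps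
      power2_eq_square power3_eq_cube)

lemma cayley_hamilton3:
  "A *v (A *v (A *v x)) =
     trace A *s (A *v (A *v x)) - principal_minor_sum A *s (A *v x) + det A *s (x::complex^3)"
  unfolding vec_eq_iff forall_3
  by (simp add: matrix_vector_mult_def sum_3 det_3 trace_def principal_minor_sum_def) algebra

lemma mat_mult_vec: "mat c *v (x::'a::comm_ring_1^'n) = c *s x"
  unfolding vec_eq_iff matrix_vector_mult_def mat_def
  by (simp add: if_distrib if_distribR cong: if_cong)

lemma matrix_ker_trivial_iff_det_nz:
  fixes A :: "'a::field^'n^'n"
  shows "(\<forall>x. A *v x = 0 \<longrightarrow> x = 0) \<longleftrightarrow> det A \<noteq> 0"
  by (simp add: matrix_left_invertible_ker[symmetric] invertible_left_inverse[symmetric]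
      invertible_det_nz)

lemma matrix_surj_of_det_nz:
  fixes A :: "'a::field^'n^'n"
  assumes "det A \<noteq> 0"
  obtains x where "A *v x = y"
  using assms by (metis invertible_det_nz invertible_right_inverse
      matrix_right_invertible_surjective surjD)

lemma qform3_add_mat: "qform3 (A + mat c) x = qform3 A x + c * of_real ((norm x)\<^sup>2)"
  by (simp add: qform3_eq_cinner3 matrix_vector_mult_add_rdistrib mat_mult_vec
      cinner3_add_right cinner3_scale_right cinner3_self)

lemma qform3_nonneg_of_char_coeffs_pos:
  assumes H: "hermitian3 A"
    and tr: "trace A = of_real s1" "0 \<le> s1"
    and pm: "principal_minor_sum A = of_real s2" "0 < s2"
    and dt: "det A = of_real s3" "0 \<le> s3"
  shows "0 \<le> Re (qform3 A x)"
proof -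
  define B where "B = A ** A + mat (of_real s2)"
  have B: "B *v z = A *v (A *v z) + of_real s2 *s z" for z
    unfolding B_def by (simp add: matrix_vector_mult_add_rdistrib matrix_vector_mul_assoc mat_mult_vec)
  have "z = 0" if "B *v z = 0" for z
  proof -
    have "cinner3 z (B *v z) = of_real ((norm (A *v z))\<^sup>2 + s2 * (norm z)\<^sup>2)"
      by (simp add: B cinner3_add_right cinner3_scale_right hermitian3_cinner3[OF H] cinner3_self)
    moreover have "cinner3 z (B *v z) = 0"
      using that by (simp add: cinner3_def)
    ultimately have "(norm (A *v z))\<^sup>2 + s2 * (norm z)\<^sup>2 = 0"
      by (metis of_real_eq_0_iff)
    then show "z = 0"
      using pm(2) by (simp add: add_nonneg_eq_0_iff)
  qed
  then obtain z where x: "x = B *v z"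
    by (metis matrix_ker_trivial_iff_det_nz matrix_surj_of_det_nz)
  have Ax: "A *v x = of_real s1 *s (A *v (A *v z)) + of_real s3 *s z"
    using cayley_hamilton3[of A z] unfolding x B tr pm dt
    by (simp add: matrix_vector_right_distrib vector_scalar_commute algebra_simps)
  let ?w = "A *v (A *v z)"
  have "qform3 A x = cinner3 (?w + of_real s2 *s z) (of_real s1 *s ?w + of_real s3 *s z)"
    unfolding qform3_eq_cinner3 Ax by (simp only: x B)
  also have "\<dots> = of_real s1 * cinner3 ?w ?w + of_real s3 * cinner3 ?w z
      + of_real s2 * of_real s1 * cinner3 z ?w + of_real s2 * of_real s3 * cinner3 z z"
    by (simp add: cinner3_add_left cinner3_add_right cinner3_scale_left cinner3_scale_right
        algebra_simps)
  also have "\<dots> = of_real (s1 * (norm ?w)\<^sup>2 + s3 * (norm (A *v z))\<^sup>2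
      + s2 * s1 * (norm (A *v z))\<^sup>2 + s2 * s3 * (norm z)\<^sup>2)"
    by (simp add: hermitian3_cinner3[OF H, symmetric] hermitian3_cinner3[OF H] cinner3_self)
  finally have "qform3 A x = of_real (s1 * (norm ?w)\<^sup>2 + s3 * (norm (A *v z))\<^sup>2
      + s2 * s1 * (norm (A *v z))\<^sup>2 + s2 * s3 * (norm z)\<^sup>2)" .
  then show ?thesis
    using tr(2) pm(2) dt(2) by simp
qed

lemma nonneg_of_perturbations_nonneg:
  fixes q n :: real
  assumes n: "0 \<le> n" and perturbed: "\<And>e. 0 < e \<Longrightarrow> 0 \<le> q + e * n"
  shows "0 \<le> q"
proof (rule ccontr)
  assume "\<not> 0 \<le> q"
  define e where "e = - q / (n + 1)"
  have "0 < e"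
    unfolding e_def using \<open>\<not> 0 \<le> q\<close> n by (simp add: divide_neg_pos)
  have "q + e * n = q / (n + 1)"
    unfolding e_def using n by (simp add: field_simps)
  also have "\<dots> < 0"
    using \<open>\<not> 0 \<le> q\<close> n by (simp add: divide_neg_pos)
  finally show False
    using perturbed[OF \<open>0 < e\<close>] by simp
qed

lemma qform3_nonneg_of_char_coeffs_nonneg:
  assumes H: "hermitian3 A"
    and tr: "trace A = of_real s1" "0 \<le> s1"
    and pm: "principal_minor_sum A = of_real s2" "0 \<le> s2"
    and dt: "det A = of_real s3" "0 \<le> s3"
  shows "0 \<le> Re (qform3 A x)"
proof (rule nonneg_of_perturbations_nonneg)
  fix e :: real
  assume e: "0 < e"
  have "0 \<le> Re (qform3 (A + mat (of_real e)) x)"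
  proof (rule qform3_nonneg_of_char_coeffs_pos)
    show "hermitian3 (A + mat (of_real e))"
      using H by (simp add: hermitian3_add_mat)
    show "trace (A + mat (of_real e)) = of_real (s1 + 3 * e)"
      "principal_minor_sum (A + mat (of_real e)) = of_real (s2 + 2 * s1 * e + 3 * e\<^sup>2)"
      "det (A + mat (of_real e)) = of_real (s3 + s2 * e + s1 * e\<^sup>2 + e ^ 3)"
      by (simp_all add: char_coeffs_add_mat tr pm dt)
    show "0 \<le> s1 + 3 * e" "0 < s2 + 2 * s1 * e + 3 * e\<^sup>2" "0 \<le> s3 + s2 * e + s1 * e\<^sup>2 + e ^ 3"
      using tr(2) pm(2) dt(2) e by (simp_all add: add_nonneg_pos)
  qed
  then show "0 \<le> Re (qform3 A x) + e * (norm x)\<^sup>2"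
    by (simp add: qform3_add_mat)
qed simp

lemma qform3_two_coords:
  fixes A :: cmat3
  assumes "i \<noteq> j"
  shows "qform3 A (\<chi> k. if k = i then a else if k = j then b else 0) =
     cnj a * (A$i$i * a + A$i$j * b) + cnj b * (A$j$i * a + A$j$j * b)"
  using exhaust_3[of i] exhaust_3[of j] assms
  by (auto simp: qform3_def matrix_vector_mult_def sum_3 algebra_simps)

lemma psd3_diag_nonneg:
  assumes "psd3 A"
  shows "0 \<le> Re (A$i$i)"
proof -
  have "qform3 A (axis i 1) = A$i$i"
    by (simp add: qform3_def matrix_vector_mult_def axis_def if_distrib if_distribR cong: if_cong)
  then show ?thesis
    using assms unfolding psd3_def by metis
qed

lemma psd3_principal_minor_nonneg:
  fixes A :: cmat3
  assumes P: "psd3 A" and ij: "i \<noteq> j"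
  shows "0 \<le> Re (A$i$i * A$j$j - A$i$j * A$j$i)"
proof -
  have H: "hermitian3 A" and Q: "\<And>x. 0 \<le> Re (qform3 A x)"
    using P unfolding psd3_def by auto
  define a d b where "a = Re (A$i$i)" and "d = Re (A$j$j)" and "b = A$i$j"
  have entries: "A$i$i = of_real a" "A$j$j = of_real d" "A$j$i = cnj b"
    using H unfolding hermitian3_iff a_def d_def b_def
    by (metis Reals_cnj_iff of_real_Re)+
  have q: "Re (qform3 A (\<chi> k. if k = i then \<alpha> else if k = j then \<beta> else 0)) =
      Re (cnj \<alpha> * (of_real a * \<alpha> + b * \<beta>) + cnj \<beta> * (cnj b * \<alpha> + of_real d * \<beta>))" for \<alpha> \<beta>
    unfolding qform3_two_coords[OF ij] entries b_def ..
  define m where "m = a * d - (cmod b)\<^sup>2"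
  have am: "0 \<le> a * m"
    using Q[of "\<chi> k. if k = i then - b else if k = j then of_real a else 0"]
    unfolding q m_def cmod_power2 by (simp add: algebra_simps power2_eq_square)
  have dm: "0 \<le> d * m"
    using Q[of "\<chi> k. if k = i then of_real d else if k = j then - cnj b else 0"]
    unfolding q m_def cmod_power2 by (simp add: algebra_simps power2_eq_square)
  have "0 \<le> a * (cmod b)\<^sup>2 - 2 * (cmod b)\<^sup>2 + d"
    using Q[of "\<chi> k. if k = i then - b else if k = j then 1 else 0"]
    unfolding q cmod_power2 by (simp add: algebra_simps power2_eq_square)
  moreover have "0 \<le> a" "0 \<le> d"
    using psd3_diag_nonneg[OF P] unfolding a_def d_def by auto
  ultimately have "0 \<le> m"
  proof (cases "a = 0 \<and> d = 0")
    case True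
    then show ?thesis
      using \<open>0 \<le> a * (cmod b)\<^sup>2 - 2 * (cmod b)\<^sup>2 + d\<close> unfolding m_def by simp
  next
    case False
    then show ?thesis
      using am dm \<open>0 \<le> a\<close> \<open>0 \<le> d\<close> by (auto simp: zero_le_mult_iff)
  qed
  then show ?thesis
    unfolding entries b_def[symmetric] m_def by (simp add: complex_norm_square[symmetric])
qed

lemma psd3_trace_nonneg: "psd3 A \<Longrightarrow> 0 \<le> Re (trace A)"
  using psd3_diag_nonneg[of A] by (simp add: trace_def sum_3)

lemma psd3_principal_minor_sum_nonneg: "psd3 A \<Longrightarrow> 0 \<le> Re (principal_minor_sum A)"
  using psd3_principal_minor_nonneg[of A 1 2] psd3_principal_minor_nonneg[of A 1 3]
    psd3_principal_minor_nonneg[of A 2 3]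
  unfolding principal_minor_sum_def by simp

lemma cubic_has_neg_root:
  fixes s1 s2 s3 :: real
  assumes "0 \<le> s1" "0 \<le> s2" "s3 < 0"
  obtains t where "t < 0" "t ^ 3 - s1 * t\<^sup>2 + s2 * t - s3 = 0"
proof -
  define g where "g t = t ^ 3 - s1 * t\<^sup>2 + s2 * t - s3" for t
  define u where "u = 1 - s3"
  have "1 \<le> u"
    unfolding u_def using assms by simp
  then have "u \<le> u ^ 3"
    using power_increasing[of 1 3 u] by simp
  moreover have "0 \<le> s1 * u\<^sup>2" "0 \<le> s2 * u"
    using assms \<open>1 \<le> u\<close> by simp_all
  moreover have "g (- u) = - (u ^ 3) - s1 * u\<^sup>2 - s2 * u - s3"
    unfolding g_def by (simp add: power2_eq_square power3_eq_cube)
  ultimately have "g (- u) \<le> 0"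
    unfolding u_def by linarith
  moreover have "0 \<le> g 0"
    unfolding g_def using assms by simp
  moreover have "isCont g t" for t
    unfolding g_def by (intro continuous_intros)
  ultimately obtain t where "t \<le> 0" "g t = 0"
    using IVT[of g "- u" 0 0] \<open>1 \<le> u\<close> by auto
  moreover have "t \<noteq> 0"
    using \<open>g t = 0\<close> assms unfolding g_def by auto
  ultimately show ?thesis
    using that[of t] unfolding g_def by simp
qed

lemma det_mat_minus_eq_0_imp_eigenvector:
  fixes A :: "'a::field^'n^'n"
  assumes "det (mat c - A) = 0"
  obtains x where "x \<noteq> 0" "A *v x = c *s x"
proof -
  obtain x where "x \<noteq> 0" "(mat c - A) *v x = 0"
    using assms matrix_ker_trivial_iff_det_nz by blast
  then show ?thesis
    using that by (simp add: matrix_vector_mult_diff_rdistrib mat_mult_vec)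
qed

lemma psd3_det_nonneg:
  assumes P: "psd3 A"
  shows "0 \<le> Re (det A)"
proof (rule ccontr)
  assume "\<not> 0 \<le> Re (det A)"
  have H: "hermitian3 A"
    using P unfolding psd3_def by simp
  obtain t where "t < 0"
    and root: "t ^ 3 - Re (trace A) * t\<^sup>2 + Re (principal_minor_sum A) * t - Re (det A) = 0"
    using cubic_has_neg_root psd3_trace_nonneg[OF P] psd3_principal_minor_sum_nonneg[OF P]
      \<open>\<not> 0 \<le> Re (det A)\<close> by (metis linorder_not_le)
  have "det (mat (of_real t) - A) = of_real (t ^ 3 - Re (trace A) * t\<^sup>2
      + Re (principal_minor_sum A) * t - Re (det A))"
    unfolding det_mat_minus using hermitian3_char_coeffs_real[OF H] by (simp add: of_real_Re)
  then obtain x where "x \<noteq> 0" "A *v x = of_real t *s x"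
    using root det_mat_minus_eq_0_imp_eigenvector by auto
  then have "Re (qform3 A x) = t * (norm x)\<^sup>2"
    by (simp add: qform3_eq_cinner3 cinner3_scale_right cinner3_self)
  also have "\<dots> < 0"
    using \<open>t < 0\<close> \<open>x \<noteq> 0\<close> by (simp add: mult_neg_pos)
  finally show False
    using P unfolding psd3_def by (metis not_le)
qed

lemma psd3_iff_char_coeffs_nonneg:
  assumes H: "hermitian3 A"
  shows "psd3 A \<longleftrightarrow>
    0 \<le> Re (trace A) \<and> 0 \<le> Re (principal_minor_sum A) \<and> 0 \<le> Re (det A)"
proof
  assume "psd3 A"
  then show "0 \<le> Re (trace A) \<and> 0 \<le> Re (principal_minor_sum A) \<and> 0 \<le> Re (det A)"
    using psd3_trace_nonneg psd3_principal_minor_sum_nonneg psd3_det_nonneg by blast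
next
  assume "0 \<le> Re (trace A) \<and> 0 \<le> Re (principal_minor_sum A) \<and> 0 \<le> Re (det A)"
  then have "0 \<le> Re (qform3 A x)" for x
    using qform3_nonneg_of_char_coeffs_nonneg[OF H] hermitian3_char_coeffs_real[OF H]
    by (metis of_real_Re)
  moreover have "Im (qform3 A x) = 0" for x
    using hermitian3_qform3_real[OF H] by (simp add: complex_is_Real_iff)
  ultimately show "psd3 A"
    using H unfolding psd3_def by simp
qed

lemma atLeastAtMost_1_8: "{1..8::nat} = {1, 2, 3, 4, 5, 6, 7, 8}"
  by auto

lemma vlam_entries:
  "vlam v $ 1 $ 1 = of_real (v 3 + v 8 / sqrt 3)"
  "vlam v $ 2 $ 2 = of_real (- v 3 + v 8 / sqrt 3)"
  "vlam v $ 3 $ 3 = of_real (- 2 * v 8 / sqrt 3)"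
  "vlam v $ 1 $ 2 = Complex (v 1) (- v 2)"
  "vlam v $ 2 $ 1 = Complex (v 1) (v 2)"
  "vlam v $ 1 $ 3 = Complex (v 4) (- v 5)"
  "vlam v $ 3 $ 1 = Complex (v 4) (v 5)"
  "vlam v $ 2 $ 3 = Complex (v 6) (- v 7)"
  "vlam v $ 3 $ 2 = Complex (v 6) (v 7)"
  unfolding vlam_def atLeastAtMost_1_8
  by (simp_all add: sum_component gell_mann_def smult3_def complex_eq_iff)

lemma hermitian3_vlam: "hermitian3 (vlam v)"
  unfolding hermitian3_iff forall_3 by (simp add: vlam_entries complex_eq_iff)

lemma trace_vlam: "trace (vlam v) = 0"
  by (simp add: trace_def sum_3 vlam_entries complex_eq_iff)

lemma principal_minor_sum_vlam: "Re (principal_minor_sum (vlam v)) = - sqnorm8 v"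
proof -
  have "Re (principal_minor_sum (vlam v)) =
      (v 3 + v 8 / sqrt 3) * (- v 3 + v 8 / sqrt 3) - (v 1 * v 1 + v 2 * v 2)
      + (v 3 + v 8 / sqrt 3) * (- 2 * v 8 / sqrt 3) - (v 4 * v 4 + v 5 * v 5)
      + (- v 3 + v 8 / sqrt 3) * (- 2 * v 8 / sqrt 3) - (v 6 * v 6 + v 7 * v 7)"
    by (simp add: principal_minor_sum_def vlam_entries)
  also have "\<dots> = - sqnorm8 v"
    unfolding sqnorm8_def atLeastAtMost_1_8 by (simp add: field_simps power2_eq_square)
  finally show ?thesis .
qed

lemma hermitian3_bloch_matrix: "hermitian3 (smult3 (1/3) (mat 1 + vlam v))"
  using hermitian3_vlam by (simp add: add.commute hermitian3_add_mat hermitian3_smult3)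

lemma trace_bloch_matrix: "trace (smult3 (1/3) (mat 1 + vlam v)) = 1"
  using char_coeffs_add_mat[of "vlam v" 1]
  by (simp add: char_coeffs_smult3 trace_vlam add.commute)

lemma principal_minor_sum_bloch_matrix:
  "Re (principal_minor_sum (smult3 (1/3) (mat 1 + vlam v))) = (3 - sqnorm8 v) / 9"
  using char_coeffs_add_mat[of "vlam v" 1]
  by (simp add: char_coeffs_smult3 add.commute trace_vlam principal_minor_sum_vlam power2_eq_square)

lemma det_bloch_matrix:
  "Re (det (smult3 (1/3) (mat 1 + vlam v))) = (1 - sqnorm8 v + Re (det (vlam v))) / 27"
  using char_coeffs_add_mat[of "vlam v" 1]
  by (simp add: char_coeffs_smult3 add.commute trace_vlam principal_minor_sum_vlam power3_eq_cube)

theorem mainTheorem17: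
  fixes v :: "nat \<Rightarrow> real"
  shows "density_matrix3 (smult3 (1/3) (mat 1 + vlam v)) \<longleftrightarrow>
         sqnorm8 v \<le> min 3 (1 + Re (det (vlam v)))"
  unfolding density_matrix3_def psd3_iff_char_coeffs_nonneg[OF hermitian3_bloch_matrix]
    trace_bloch_matrix principal_minor_sum_bloch_matrix det_bloch_matrix
  by auto

end
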